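(* Let $L>1$ be a real number that is not an integer and let $T>0$. The following are equivalent: (i) there exists a continuous function $f:[0,T]\to\mathbb{R}$ with $f(0)=0$ and $f(T)=L$ such that there are no $s,t\in[0,T]$ with $t-s=T/L$ and $f(t)-f(s)=1$; (ii) there exists a continuous function $g:[0,L]\to\mathbb{R}$ with $g(0)=g(L)=0$ such that there is no $x\in[0,L-1]$ with $g(x)=g(x+1)$.
   Context: Statement (i) expresses that a race of length $L$ completed in time $T$ has a position function with no one-unit portion covered at exactly the average pace; statement (ii) expresses that some function on $[0,L]$ vanishing at both endpoints has no horizontal chord of length $1$. *)

theory Defs
  imports "HOL-Analysis.Analysis"
begin

end

theory Submission
  imports Defs
begin

text \<open>The substitution x = t L / T together with subtracting f from the identity, i.e.
  g x = x - f (x T / L), turns a unit rise over horizontal distance T / L into a horizontal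
  chord of length 1, and the endpoint condition f T = L into g L = 0. The substitution is
  invertible, f t = t L / T - g (t L / T), so it transports witnesses in both directions.\<close>

definition has_chord :: "(real \<Rightarrow> real) \<Rightarrow> real set \<Rightarrow> real \<Rightarrow> real \<Rightarrow> bool" where
  "has_chord f S d r \<longleftrightarrow> (\<exists>s\<in>S. \<exists>t\<in>S. t - s = d \<and> f t - f s = r)"

lemma has_horizontal_unit_chord_iff:
  "has_chord g {0..L} 1 0 \<longleftrightarrow> (\<exists>x\<in>{0..L-1}. g x = g (x + 1))"
proof
  assume "has_chord g {0..L} 1 0"
  then obtain s t where "s \<in> {0..L}" "t \<in> {0..L}" "t - s = 1" "g t = g s"
    unfolding has_chord_def by auto
  then show "\<exists>x\<in>{0..L-1}. g x = g (x + 1)"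
    by (intro bexI[of _ s]) (auto simp: algebra_simps)
next
  assume "\<exists>x\<in>{0..L-1}. g x = g (x + 1)"
  then obtain x where "x \<in> {0..L-1}" "g x = g (x + 1)" by blast
  then show "has_chord g {0..L} 1 0"
    unfolding has_chord_def by (intro bexI[of _ x] bexI[of _ "x + 1"]) auto
qed

lemma has_chord_rescale:
  fixes k m :: real
  assumes "k > 0"
  shows "has_chord (\<lambda>x. m * x - f (x / k)) {0..k * T} (k * d) (m * k * d - r)
     \<longleftrightarrow> has_chord f {0..T} d r"
proof
  assume "has_chord (\<lambda>x. m * x - f (x / k)) {0..k * T} (k * d) (m * k * d - r)"
  then obtain x y where "x \<in> {0..k * T}" "y \<in> {0..k * T}" "y - x = k * d"
    "m * y - f (y / k) - (m * x - f (x / k)) = m * k * d - r"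
    unfolding has_chord_def by blast
  with assms have "x / k \<in> {0..T}" "y / k \<in> {0..T}" "y / k - x / k = d"
    "f (y / k) - f (x / k) = r"
    by (auto simp: field_simps)
  then show "has_chord f {0..T} d r"
    unfolding has_chord_def by blast
next
  assume "has_chord f {0..T} d r"
  then obtain s t where "s \<in> {0..T}" "t \<in> {0..T}" "t - s = d" "f t - f s = r"
    unfolding has_chord_def by blast
  with assms have "k * s \<in> {0..k * T}" "k * t \<in> {0..k * T}"
    by auto
  moreover have "k * t - k * s = k * d"
    using \<open>t - s = d\<close> by (simp add: right_diff_distrib[symmetric])
  moreover have "m * (k * t) - f (k * t / k) - (m * (k * s) - f (k * s / k))
      = m * k * (t - s) - (f t - f s)"
    using assms by (simp add: algebra_simps)
  ultimately have "has_chord (\<lambda>x. m * x - f (x / k)) {0..k * T} (k * d) (m * k * (t - s) - (f t - f s))"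
    unfolding has_chord_def by blast
  with \<open>t - s = d\<close> \<open>f t - f s = r\<close>
  show "has_chord (\<lambda>x. m * x - f (x / k)) {0..k * T} (k * d) (m * k * d - r)"
    by simp
qed

lemma continuous_on_rescale:
  fixes k m :: real
  assumes "k > 0" and "continuous_on {0..T} f"
  shows "continuous_on {0..k * T} (\<lambda>x. m * x - f (x / k))"
proof (intro continuous_intros continuous_on_compose2[OF assms(2)])
  show "(\<lambda>x. x / k) ` {0..k * T} \<subseteq> {0..T}"
    using assms(1) by (auto simp: field_simps)
qed (use assms(1) in auto)

lemma rescale_chordless_function:
  fixes k m :: real
  assumes "k > 0"
    and "continuous_on {0..T} f" "f 0 = 0" "f T = A" "\<not> has_chord f {0..T} d r"
    and "k * T = T'" "m * k * T - A = A'" "k * d = d'" "m * k * d - r = r'"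
  shows "\<exists>g. continuous_on {0..T'} g \<and> g 0 = 0 \<and> g T' = A' \<and> \<not> has_chord g {0..T'} d' r'"
proof -
  let ?g = "\<lambda>x. m * x - f (x / k)"
  have "continuous_on {0..k * T} ?g \<and> ?g 0 = 0 \<and> ?g (k * T) = m * k * T - A
      \<and> \<not> has_chord ?g {0..k * T} (k * d) (m * k * d - r)"
    using assms(1-5) continuous_on_rescale[OF assms(1,2)] has_chord_rescale[OF assms(1)] by auto
  then show ?thesis
    unfolding assms(6-9) by blast
qed

theorem lemma1:
  fixes L T :: real
  assumes "L > 1" and "L \<notin> \<int>" and "T > 0"
  shows "(\<exists>f :: real \<Rightarrow> real. continuous_on {0..T} f \<and> f 0 = 0 \<and> f T = L \<and>
            \<not> (\<exists>s\<in>{0..T}. \<exists>t\<in>{0..T}. t - s = T / L \<and> f t - f s = 1))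
     \<longleftrightarrow>
         (\<exists>g :: real \<Rightarrow> real. continuous_on {0..L} g \<and> g 0 = 0 \<and> g L = 0 \<and>
            \<not> (\<exists>x\<in>{0..L-1}. g x = g (x + 1)))"
proof -
  have L: "L > 0" using assms(1) by simp
  have "(\<exists>f. continuous_on {0..T} f \<and> f 0 = 0 \<and> f T = L \<and> \<not> has_chord f {0..T} (T / L) 1)
    \<longleftrightarrow> (\<exists>g. continuous_on {0..L} g \<and> g 0 = 0 \<and> g L = 0 \<and> \<not> has_chord g {0..L} 1 0)"
  proof (intro iffI; elim exE conjE)
    fix f assume f: "continuous_on {0..T} f" "f 0 = 0" "f T = L" "\<not> has_chord f {0..T} (T / L) 1"
    show "\<exists>g. continuous_on {0..L} g \<and> g 0 = 0 \<and> g L = 0 \<and> \<not> has_chord g {0..L} 1 0"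
      by (rule rescale_chordless_function[where k = "L / T" and m = 1 and f = f and T = T
            and A = L and d = "T / L" and r = 1]) (use f L assms(3) in simp_all)
  next
    fix g assume g: "continuous_on {0..L} g" "g 0 = 0" "g L = 0" "\<not> has_chord g {0..L} 1 0"
    show "\<exists>f. continuous_on {0..T} f \<and> f 0 = 0 \<and> f T = L \<and> \<not> has_chord f {0..T} (T / L) 1"
      by (rule rescale_chordless_function[where k = "T / L" and m = "L / T" and f = g and T = L
            and A = 0 and d = 1 and r = 0]) (use g L assms(3) in simp_all)
  qed
  then show ?thesis
    unfolding has_horizontal_unit_chord_iff by (simp only: has_chord_def)
qed

end
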